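(* Let $F$ be a distribution function on $\mathbb{R}$ with tail $\overline{F}=1-F$ and let $h(\cdot)$ be a positive function. Then: $F\in \mathrm{GMDA}(h)$ and $h(x)\to\infty$ as $x\to\infty$ if and only if $F\in \mathrm{GMDA}(h)\cap\mathcal{L}$. Moreover, either of these equivalent conditions implies that $h^{p}(\cdot)\in\mathcal{H}^{\ast}_F$ for every $p\in(0,1)$.
   Context: A distribution function $F$ with upper endpoint $x_F=\sup\{x:F(x)<1\}$ belongs to the Gumbel max-domain of attraction with scaling function $h>0$, written $F\in\mathrm{GMDA}(h)$, if $\lim_{x\to x_F}\overline{F}(x+yh(x))/\overline{F}(x)=e^{-y}$ for all $y\in\mathbb{R}$. $F$ is long-tailed, $F\in\mathcal{L}$, if $\overline{F}(x)>0$ for all $x\ge 0$ and $\overline{F}(x+y)/\overline{F}(x)\to1$ as $x\to\infty$ for every $y\in\mathbb{R}$. For $F\in\mathcal{L}$, $\mathcal{H}_F$ is the set of eventually positive functions $h$ such that (i) $h(x)/x\to0$; (ii) $\overline{F}(x+yh(x))/\overline{F}(x)\to1$ as $x\to\infty$ for every $y\in\mathbb{R}$; (iii) $h$ is weakly self-neglecting, i.e. $\limsup_{x\to\infty}h(x+yh(x))/h(x)<\infty$ for every $y\in\mathbb{R}$. $\mathcal{H}^\ast_F=\{h\in\mathcal{H}_F: h(x)\to\infty\}$. *)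

theory Defs
  imports "HOL-Analysis.Analysis" "HOL-Library.Liminf_Limsup"
begin

definition distr_fun :: "(real \<Rightarrow> real) \<Rightarrow> bool" where
  "distr_fun F \<longleftrightarrow> mono F \<and> (\<forall>x. continuous (at_right x) F)
     \<and> (F \<longlongrightarrow> 0) at_bot \<and> (F \<longlongrightarrow> 1) at_top"

definition tail :: "(real \<Rightarrow> real) \<Rightarrow> real \<Rightarrow> real" where
  "tail F x = 1 - F x"

definition upper_endpoint :: "(real \<Rightarrow> real) \<Rightarrow> ereal" where
  "upper_endpoint F = Sup (ereal ` {x. F x < 1})"

definition endpoint_filter :: "(real \<Rightarrow> real) \<Rightarrow> real filter" where
  "endpoint_filter F =
     (if upper_endpoint F = \<infinity> then at_top else at_left (real_of_ereal (upper_endpoint F)))"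

definition GMDA :: "(real \<Rightarrow> real) \<Rightarrow> (real \<Rightarrow> real) \<Rightarrow> bool" where
  "GMDA F h \<longleftrightarrow> (\<forall>y::real.
     ((\<lambda>x. tail F (x + y * h x) / tail F x) \<longlongrightarrow> exp (- y)) (endpoint_filter F))"

definition long_tailed :: "(real \<Rightarrow> real) \<Rightarrow> bool" where
  "long_tailed F \<longleftrightarrow> (\<forall>x\<ge>0. tail F x > 0) \<and>
     (\<forall>y::real. ((\<lambda>x. tail F (x + y) / tail F x) \<longlongrightarrow> 1) at_top)"

definition H_class :: "(real \<Rightarrow> real) \<Rightarrow> (real \<Rightarrow> real) set" where
  "H_class F = {h. eventually (\<lambda>x. h x > 0) at_top
     \<and> ((\<lambda>x. h x / x) \<longlongrightarrow> 0) at_top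
     \<and> (\<forall>y::real. ((\<lambda>x. tail F (x + y * h x) / tail F x) \<longlongrightarrow> 1) at_top)
     \<and> (\<forall>y::real. Limsup at_top (\<lambda>x. ereal (h (x + y * h x) / h x)) < \<infinity>)}"

definition H_star_class :: "(real \<Rightarrow> real) \<Rightarrow> (real \<Rightarrow> real) set" where
  "H_star_class F = {h \<in> H_class F. filterlim h at_top at_top}"

end

theory Submission
  imports Defs "HOL-Library.Landau_Symbols" "HOL-Real_Asymp.Real_Asymp"
begin

text \<open>
  If h tended to infinity towards a finite endpoint x_F, then for x close to x_F the point
  x + h(x) would lie beyond x_F, so the GMDA ratio at y = 1 would vanish instead of tending to
  e^{-1}; a long-tailed tail never vanishes. So both conditions force x_F = \<infinity>. There,
  monotonicity of the tail squeezes tail(x + g(x)) / tail(x) between the GMDA limits at \<plusminus>\<epsilon>,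
  hence to 1, for every g = o(h): with g constant this gives long-tailedness, and conversely
  long-tailedness forbids h from staying below a bound M, because then tail(x + h(x)) would
  dominate tail(x + M) ~ tail(x) although it is ~ e^{-1} tail(x).
  For h^p, g = y h^p is o(h), and comparing the GMDA limits at x + g(x) and at x shows
  h(x + g(x)) \<le> 4 h(x) eventually, which gives the weak self-neglect of h^p.
\<close>

lemma distr_fun_le_one:
  assumes "distr_fun F" shows "F x \<le> 1"
proof -
  have "mono F" and lim: "(F \<longlongrightarrow> 1) at_top" using assms by (auto simp: distr_fun_def)
  have "eventually (\<lambda>t. F x \<le> F t) at_top"
    using eventually_ge_at_top[of x] by eventually_elim (simp add: \<open>mono F\<close> monoD)
  from tendsto_lowerbound[OF lim this] show ?thesis by simp
qed

lemma tail_antimono: "mono F \<Longrightarrow> a \<le> b \<Longrightarrow> tail F b \<le> tail F a"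
  by (simp add: tail_def monoD)

lemma tail_tendsto_0: "distr_fun F \<Longrightarrow> (tail F \<longlongrightarrow> 0) at_top"
  unfolding distr_fun_def tail_def by (auto intro: tendsto_eq_intros)

lemma upper_endpoint_eq_infinity_iff:
  assumes "mono F" shows "upper_endpoint F = \<infinity> \<longleftrightarrow> (\<forall>x. F x < 1)"
proof
  assume "upper_endpoint F = \<infinity>"
  show "\<forall>x. F x < 1"
  proof
    fix x
    have "ereal x < Sup (ereal ` {x. F x < 1})"
      using \<open>upper_endpoint F = \<infinity>\<close> by (simp add: upper_endpoint_def)
    then obtain z where "F z < 1" "x < z" by (auto simp: less_Sup_iff)
    then show "F x < 1" using assms by (meson le_less_trans less_imp_le monoD)
  qed
next
  assume "\<forall>x. F x < 1"
  then have "upper_endpoint F = Sup (range ereal)" by (simp add: upper_endpoint_def)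
  also have "\<dots> = \<infinity>"
    by (meson Sup_le_iff ereal_top iso_tuple_UNIV_I order_refl rev_image_eqI)
  finally show "upper_endpoint F = \<infinity>" .
qed

lemma tail_eq_0_beyond_upper_endpoint:
  assumes "distr_fun F" "upper_endpoint F \<noteq> \<infinity>"
    and "x > real_of_ereal (upper_endpoint F)"
  shows "tail F x = 0"
proof -
  have "\<not> F x < 1"
  proof
    assume "F x < 1"
    then have "ereal x \<le> upper_endpoint F" unfolding upper_endpoint_def by (auto intro: Sup_upper)
    then show False using assms(2,3) by (cases "upper_endpoint F") auto
  qed
  then show ?thesis using distr_fun_le_one[OF assms(1), of x] by (simp add: tail_def)
qed

lemma GMDA_scale_tendsto_infinity_imp_upper_endpoint_infinite:
  assumes F: "distr_fun F" and "GMDA F h" and h: "filterlim h at_top (endpoint_filter F)"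
  shows "upper_endpoint F = \<infinity>"
proof (rule ccontr)
  assume finite: "upper_endpoint F \<noteq> \<infinity>"
  define c where "c = real_of_ereal (upper_endpoint F)"
  have filter: "endpoint_filter F = at_left c" using finite by (simp add: endpoint_filter_def c_def)
  have "((\<lambda>x. tail F (x + 1 * h x) / tail F x) \<longlongrightarrow> exp (- 1)) (at_left c)"
    using \<open>GMDA F h\<close> unfolding GMDA_def filter by blast
  then have "eventually (\<lambda>x. 0 < tail F (x + 1 * h x) / tail F x) (at_left c)"
    by (rule order_tendstoD(1)) simp
  moreover have "eventually (\<lambda>x. 1 \<le> h x) (at_left c)"
    using h by (simp add: filter filterlim_at_top)
  moreover have "eventually (\<lambda>x. x \<in> {c - 1<..<c}) (at_left c)"
    by (rule eventually_at_left_real) simp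
  ultimately have "eventually (\<lambda>x. False) (at_left c)"
  proof eventually_elim
    case (elim x)
    then have "tail F (x + 1 * h x) = 0"
      by (intro tail_eq_0_beyond_upper_endpoint[OF F finite]) (auto simp: c_def)
    then show False using elim by simp
  qed
  then show False by simp
qed

lemma long_tailed_imp_upper_endpoint_infinite:
  assumes "mono F" "long_tailed F" shows "upper_endpoint F = \<infinity>"
  unfolding upper_endpoint_eq_infinity_iff[OF assms(1)]
proof
  fix x
  have "F (max x 0) < 1" using assms(2) by (simp add: long_tailed_def tail_def)
  moreover have "F x \<le> F (max x 0)" using assms(1) by (simp add: monoD)
  ultimately show "F x < 1" by linarith
qed

lemma exp_bounds: "exp (- 1 :: real) < 1 / 2" "exp (1 :: real) < 3" "6 < exp (3 :: real)"
proof -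
  have two: "2 < exp (1 :: real)" using exp_minus_greater[of "- 1 :: real"] by simp
  then show "exp (- 1 :: real) < 1 / 2" by (simp add: exp_minus field_simps)
  show "exp (1 :: real) < 3" using e_less_272 by simp
  have "(2::real) ^ 3 < exp 1 ^ 3" using two by (intro power_strict_mono) auto
  then show "6 < exp (3 :: real)" by (simp add: exp_of_nat_mult[symmetric])
qed

locale gumbel_domain_at_top =
  fixes F h :: "real \<Rightarrow> real"
  assumes distr_fun: "distr_fun F"
    and tail_pos: "\<And>x. tail F x > 0"
    and scale_pos: "\<And>x. h x > 0"
    and GMDA_at_top: "\<And>y. ((\<lambda>x. tail F (x + y * h x) / tail F x) \<longlongrightarrow> exp (- y)) at_top"
begin

lemma mono: "mono F"
  using distr_fun by (simp add: distr_fun_def)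

lemma tail_ratio_antimono: "a \<le> b \<Longrightarrow> tail F b / tail F x \<le> tail F a / tail F x"
  using tail_antimono[OF mono] tail_pos by (simp add: divide_right_mono less_imp_le)

lemma smallo_imp_tail_ratio_tendsto_1:
  assumes g: "g \<in> o(h)"
  shows "((\<lambda>x. tail F (x + g x) / tail F x) \<longlongrightarrow> 1) at_top"
proof (rule order_tendstoI)
  fix a :: real assume "a < 1"
  define \<epsilon> where "\<epsilon> = 1 - a"
  have "\<epsilon> > 0" using \<open>a < 1\<close> by (simp add: \<epsilon>_def)
  then have "a < exp (- \<epsilon>)" using exp_minus_greater[of \<epsilon>] by (simp add: \<epsilon>_def)
  then have "eventually (\<lambda>x. a < tail F (x + \<epsilon> * h x) / tail F x) at_top"
    by (rule order_tendstoD(1)[OF GMDA_at_top])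
  moreover have "eventually (\<lambda>x. \<bar>g x\<bar> \<le> \<epsilon> * \<bar>h x\<bar>) at_top"
    using landau_o.smallD[OF g \<open>\<epsilon> > 0\<close>] by simp
  ultimately show "eventually (\<lambda>x. a < tail F (x + g x) / tail F x) at_top"
  proof eventually_elim
    case (elim x)
    have "x + g x \<le> x + \<epsilon> * h x" using elim(2) scale_pos[of x] by simp
    then show ?case using elim(1) tail_ratio_antimono by (meson less_le_trans)
  qed
next
  fix a :: real assume "a > 1"
  define \<epsilon> where "\<epsilon> = ln a / 2"
  have "\<epsilon> > 0" using \<open>a > 1\<close> by (simp add: \<epsilon>_def)
  have "exp (- (- \<epsilon>)) < a"
    using \<open>a > 1\<close> \<open>\<epsilon> > 0\<close> exp_less_cancel_iff[of \<epsilon> "ln a"] by (simp add: \<epsilon>_def)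
  then have "eventually (\<lambda>x. tail F (x + (- \<epsilon>) * h x) / tail F x < a) at_top"
    by (rule order_tendstoD(2)[OF GMDA_at_top])
  moreover have "eventually (\<lambda>x. \<bar>g x\<bar> \<le> \<epsilon> * \<bar>h x\<bar>) at_top"
    using landau_o.smallD[OF g \<open>\<epsilon> > 0\<close>] by simp
  ultimately show "eventually (\<lambda>x. tail F (x + g x) / tail F x < a) at_top"
  proof eventually_elim
    case (elim x)
    have "x + (- \<epsilon>) * h x \<le> x + g x" using elim(2) scale_pos[of x] by simp
    then show ?case using elim(1) tail_ratio_antimono by (meson le_less_trans)
  qed
qed

lemma long_tailed_iff_scale_tendsto_infinity:
  "long_tailed F \<longleftrightarrow> filterlim h at_top at_top"
proof
  assume "long_tailed F"
  show "filterlim h at_top at_top"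
    unfolding filterlim_at_top
  proof
    fix M :: real
    have "eventually (\<lambda>x. tail F (x + 1 * h x) / tail F x < 1 / 2) at_top"
      using exp_bounds(1) by (intro order_tendstoD(2)[OF GMDA_at_top]) simp
    moreover have "eventually (\<lambda>x. 1 / 2 < tail F (x + M) / tail F x) at_top"
      using \<open>long_tailed F\<close> by (intro order_tendstoD(1)) (auto simp: long_tailed_def)
    ultimately show "eventually (\<lambda>x. M \<le> h x) at_top"
    proof eventually_elim
      case (elim x)
      show ?case
      proof (rule ccontr)
        assume "\<not> M \<le> h x"
        then have "tail F (x + M) / tail F x \<le> tail F (x + 1 * h x) / tail F x"
          by (intro tail_ratio_antimono) simp
        with elim show False by linarith
      qed
    qed
  qed
next
  assume h: "filterlim h at_top at_top"
  have "(\<lambda>_. y) \<in> o(h)" for y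
  proof -
    have "(\<lambda>_::real. y) \<in> o(\<lambda>x. x)" by real_asymp
    from landau_o.small.compose[OF this h] show ?thesis by simp
  qed
  then show "long_tailed F"
    using smallo_imp_tail_ratio_tendsto_1 tail_pos by (auto simp: long_tailed_def)
qed

lemma tail_ratio_tendsto_imp_filterlim_at_top:
  assumes "((\<lambda>x. tail F (u x) / tail F x) \<longlongrightarrow> c) at_top"
  shows "filterlim u at_top at_top"
  unfolding filterlim_at_top
proof
  fix M :: real
  have "((\<lambda>x. tail F (u x) / tail F x * tail F x) \<longlongrightarrow> c * 0) at_top"
    by (intro tendsto_mult assms tail_tendsto_0[OF distr_fun])
  then have "((\<lambda>x. tail F (u x)) \<longlongrightarrow> 0) at_top"
    using tail_pos by (simp add: less_imp_neq[symmetric])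
  then have "eventually (\<lambda>x. tail F (u x) < tail F M) at_top"
    by (rule order_tendstoD(2)[OF _ tail_pos])
  then show "eventually (\<lambda>x. M \<le> u x) at_top"
    by eventually_elim (meson linorder_not_le not_less tail_antimono[OF mono] less_imp_le)
qed

lemma eventually_scale_le_4_times:
  assumes ratio: "((\<lambda>x. tail F (u x) / tail F x) \<longlongrightarrow> 1) at_top"
  shows "eventually (\<lambda>x. h (u x) \<le> 4 * h x) at_top"
proof -
  have "eventually (\<lambda>t. tail F (t + (- 1) * h t) / tail F t < 3) at_top"
    using exp_bounds(2) by (intro order_tendstoD(2)[OF GMDA_at_top]) simp
  from eventually_compose_filterlim[OF this tail_ratio_tendsto_imp_filterlim_at_top[OF ratio]]
  have "eventually (\<lambda>x. tail F (u x - h (u x)) < 3 * tail F (u x)) at_top"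
    using tail_pos by (simp add: pos_divide_less_eq)
  moreover have "eventually (\<lambda>x. tail F (u x) < 2 * tail F x) at_top"
    using order_tendstoD(2)[OF ratio, of 2] tail_pos by (simp add: pos_divide_less_eq)
  moreover have "eventually (\<lambda>x. 6 < tail F (x + (- 3) * h x) / tail F x) at_top"
    using exp_bounds(3) by (intro order_tendstoD(1)[OF GMDA_at_top]) simp
  then have "eventually (\<lambda>x. 6 * tail F x < tail F (x - 3 * h x)) at_top"
    using tail_pos by (simp add: pos_less_divide_eq)
  moreover have "eventually (\<lambda>x. tail F (x + 1 * h x) / tail F x < 1 / 2) at_top"
    using exp_bounds(1) by (intro order_tendstoD(2)[OF GMDA_at_top]) simp
  moreover have "eventually (\<lambda>x. 1 / 2 < tail F (u x) / tail F x) at_top"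
    using order_tendstoD(1)[OF ratio, of "1 / 2"] by simp
  ultimately show ?thesis
  proof eventually_elim
    case (elim x)
    \<comment> \<open>A jump beyond x + h x would already make the tail ratio smaller than 1/2.\<close>
    have "u x \<le> x + h x"
    proof (rule ccontr)
      assume "\<not> u x \<le> x + h x"
      then have "tail F (u x) / tail F x \<le> tail F (x + 1 * h x) / tail F x"
        by (intro tail_ratio_antimono) simp
      with elim(4,5) show False by linarith
    qed
    show ?case
    proof (rule ccontr)
      assume "\<not> h (u x) \<le> 4 * h x"
      with \<open>u x \<le> x + h x\<close> have "tail F (x - 3 * h x) \<le> tail F (u x - h (u x))"
        by (intro tail_antimono[OF mono]) simp
      with elim(1-3) show False by linarith
    qed
  qed
qed

lemma powr_scale_in_H_star_class:
  assumes h: "filterlim h at_top at_top" and p: "0 < p" "p < 1"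
  shows "(\<lambda>x. h x powr p) \<in> H_star_class F"
proof -
  have "(\<lambda>x::real. x powr p) \<in> o(\<lambda>x. x)" using p by real_asymp
  from landau_o.small.compose[OF this h] have powr_smallo: "(\<lambda>x. h x powr p) \<in> o(h)"
    by simp
  have ratio: "((\<lambda>x. tail F (x + y * h x powr p) / tail F x) \<longlongrightarrow> 1) at_top" for y
    using powr_smallo by (intro smallo_imp_tail_ratio_tendsto_1) simp
  have "filterlim (\<lambda>x. x + (- 1) * h x) at_top at_top"
    using GMDA_at_top by (rule tail_ratio_tendsto_imp_filterlim_at_top)
  then have "eventually (\<lambda>x. 0 < x + (- 1) * h x) at_top"
    unfolding filterlim_at_top_dense by blast
  then have "eventually (\<lambda>x. h x < x) at_top"
    by eventually_elim simp
  then have "eventually (\<lambda>x. norm (h x) \<le> 1 * norm x) at_top"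
    by eventually_elim (use scale_pos in \<open>simp add: less_imp_le\<close>)
  then have "h \<in> O(\<lambda>x. x)" by (rule bigoI)
  with powr_smallo have "((\<lambda>x. h x powr p / x) \<longlongrightarrow> 0) at_top"
    by (rule smalloD_tendsto[OF landau_o.small_big_trans])
  moreover have "Limsup at_top (\<lambda>x. ereal (h (x + y * h x powr p) powr p / h x powr p)) < \<infinity>" for y
  proof -
    have "eventually (\<lambda>x. ereal (h (x + y * h x powr p) powr p / h x powr p) \<le> ereal (4 powr p)) at_top"
      using eventually_scale_le_4_times[OF ratio[of y]]
    proof eventually_elim
      case (elim x)
      have "h (x + y * h x powr p) powr p \<le> (4 * h x) powr p"
        using elim scale_pos p by (intro powr_mono2) (auto intro: less_imp_le)
      also have "\<dots> = 4 powr p * h x powr p" using scale_pos by (simp add: powr_mult)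
      finally show ?case using scale_pos by (simp add: divide_le_eq)
    qed
    then have "Limsup at_top (\<lambda>x. ereal (h (x + y * h x powr p) powr p / h x powr p)) \<le> 4 powr p"
      by (rule Limsup_bounded)
    then show ?thesis by (rule order.strict_trans1) simp
  qed
  moreover have "filterlim (\<lambda>x. h x powr p) at_top at_top"
    using real_powr_at_top[OF p(1)] h by (rule filterlim_compose)
  ultimately show ?thesis
    using ratio scale_pos by (simp add: H_star_class_def H_class_def less_imp_neq[symmetric])
qed

end

theorem lemma2p1:
  fixes F h :: "real \<Rightarrow> real"
  assumes "distr_fun F"
    and "\<And>x. h x > 0"
  shows "((GMDA F h \<and> filterlim h at_top (endpoint_filter F)) \<longleftrightarrow> (GMDA F h \<and> long_tailed F))
         \<and> (GMDA F h \<and> long_tailed F \<longrightarrow>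
              (\<forall>p::real. 0 < p \<and> p < 1 \<longrightarrow> (\<lambda>x. h x powr p) \<in> H_star_class F))"
proof (cases "GMDA F h \<and> upper_endpoint F = \<infinity>")
  case True
  have mono: "mono F" using assms(1) by (simp add: distr_fun_def)
  have filter: "endpoint_filter F = at_top" using True by (simp add: endpoint_filter_def)
  interpret gumbel_domain_at_top F h
    using assms True upper_endpoint_eq_infinity_iff[OF mono]
    by unfold_locales (auto simp: GMDA_def filter tail_def)
  show ?thesis
    using long_tailed_iff_scale_tendsto_infinity powr_scale_in_H_star_class filter by auto
next
  case False
  then show ?thesis
    using GMDA_scale_tendsto_infinity_imp_upper_endpoint_infinite[OF assms(1)]
      long_tailed_imp_upper_endpoint_infinite assms(1) by (auto simp: distr_fun_def)
qed

end
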